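(* Let $a>0$, $B_u>0$, $B_v<0$, $\Delta x\in(0,1]$, $\varepsilon>0$, and let $\alpha<(3+2\sqrt2)B_v^{-1}$. Assume $2aB_v+\tfrac{\Delta x}{\varepsilon}B_u>0$. Then $$-\frac{aB_u^2}{B_v}\alpha+\frac{B_u}{B_v}\frac{\Delta x}{2\varepsilon}<-a(1-B_v\alpha)-\sqrt{-2a\bigl(2aB_v+\tfrac{\Delta x}{\varepsilon}B_u\bigr)\alpha}.$$ *)

theory Defs
  imports Complex_Main
begin

end

theory Submission
  imports Defs
begin

text \<open>With \<open>c = 2 a B\<^sub>v + k B\<^sub>u > 0\<close> and \<open>\<alpha> < 0\<close>, AM-GM applied to the nonnegative numbers
  \<open>2 a B\<^sub>v \<alpha>\<close> and \<open>-c / B\<^sub>v\<close> bounds the square root by \<open>a B\<^sub>v \<alpha> - c / (2 B\<^sub>v)\<close>.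
  After this substitution the difference of the two sides collapses to \<open>-(a B\<^sub>u\<^sup>2 / B\<^sub>v) \<alpha>\<close>,
  which is negative.\<close>

lemma lemma4_of_neg_alpha:
  fixes a B_u B_v k \<alpha> :: real
  assumes "a > 0" and "B_u \<noteq> 0" and "B_v < 0" and "\<alpha> < 0"
    and "2 * a * B_v + k * B_u > 0"
  shows "- (a * B_u^2 / B_v) * \<alpha> + (B_u / B_v) * (k / 2)
         < - a * (1 - B_v * \<alpha>) - sqrt (- 2 * a * (2 * a * B_v + k * B_u) * \<alpha>)"
proof -
  define c where "c = 2 * a * B_v + k * B_u"
  have "0 \<le> 2 * a * B_v * \<alpha>"
    using assms by (simp add: zero_le_mult_iff mult_le_0_iff)
  moreover have "0 \<le> - c / B_v"
    using assms by (intro divide_nonpos_neg) (simp_all add: c_def)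
  ultimately have "sqrt ((2 * a * B_v * \<alpha>) * (- c / B_v)) \<le> (2 * a * B_v * \<alpha> + - c / B_v) / 2"
    by (rule arith_geo_mean_sqrt)
  moreover have "(2 * a * B_v * \<alpha>) * (- c / B_v) = - 2 * a * c * \<alpha>"
    using assms(3) by (simp add: field_simps)
  ultimately have sqrt_le: "sqrt (- 2 * a * c * \<alpha>) \<le> a * B_v * \<alpha> - c / (2 * B_v)"
    by (simp add: field_simps)
  have "- (a * B_u^2 / B_v) * \<alpha> + (B_u / B_v) * (k / 2) + a * (1 - B_v * \<alpha>)
        + (a * B_v * \<alpha> - c / (2 * B_v)) = - (a * B_u^2 / B_v) * \<alpha>"
    using assms(3) by (simp add: c_def field_simps)
  moreover have "0 < a * B_u^2 * \<alpha> / B_v"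
    using assms by (intro divide_neg_neg mult_pos_neg) simp_all
  ultimately show ?thesis
    using sqrt_le by (simp add: c_def)
qed

theorem lemma4:
  fixes a B_u B_v dx \<epsilon> \<alpha> :: real
  assumes "a > 0" and "B_u > 0" and "B_v < 0"
    and "0 < dx" and "dx \<le> 1" and "\<epsilon> > 0"
    and "\<alpha> < (3 + 2 * sqrt 2) / B_v"
    and "2 * a * B_v + (dx / \<epsilon>) * B_u > 0"
  shows "- (a * B_u^2 / B_v) * \<alpha> + (B_u / B_v) * (dx / (2 * \<epsilon>))
         < - a * (1 - B_v * \<alpha>) - sqrt (- 2 * a * (2 * a * B_v + (dx / \<epsilon>) * B_u) * \<alpha>)"
proof -
  have "(3 + 2 * sqrt 2) / B_v < 0"
    using \<open>B_v < 0\<close> by (simp add: divide_pos_neg add_pos_nonneg)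
  with \<open>\<alpha> < (3 + 2 * sqrt 2) / B_v\<close> have "\<alpha> < 0"
    by linarith
  moreover have "dx / (2 * \<epsilon>) = (dx / \<epsilon>) / 2"
    by simp
  ultimately show ?thesis
    using lemma4_of_neg_alpha[of a B_u B_v \<alpha> "dx / \<epsilon>"] assms by simp
qed

end
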